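(* Assume (A1), (A2), (A3). Let $x\in\mathcal{C}$ and $\beta>\beta_1(x)$. The gradient-step backtracking procedure (described in the context) started at $x$ terminates with a step size $t\ge\tau_1\min(\underline{\alpha_1},t_1(x))>0$, where $\underline{\alpha_1}=\min\big(\alpha_{01},\tfrac{2(1-c_1)}{L_g}\big)$, and $$g(x)-g(x-t\nabla g(x))\ge c_1\tau_1\min(\underline{\alpha_1},t_1(x))\,\|\nabla g(x)\|^2.$$
   Context: Let $\mathcal{E}$ be a Euclidean space with inner product $\langle\cdot,\cdot\rangle$ and norm $\|\cdot\|$ (2-norm on $\mathbb{R}^m$), and $f\colon\mathcal{E}\to\mathbb{R}$, $h\colon\mathcal{E}\to\mathbb{R}^m$ be $C^\infty$. $\mathrm{D}h(x)$ is the differential, $\mathrm{D}h(x)^*$ its adjoint, $\sigma_1$ and $\sigma_{\min}=\sigma_m$ the largest and $m$-th singular values. $\mathcal{D}=\{x:\operatorname{rank}\mathrm{D}h(x)=m\}$; for $x\in\mathcal{D}$, $\lambda(x)=(\mathrm{D}h(x)^* )^\dagger[\nabla f(x)]$ (Moore–Penrose), smooth on $\mathcal{D}$. For fixed $\beta\ge0$, $g(x)=f(x)-\langle h(x),\lambda(x)\rangle+\beta\|h(x)\|^2$. (A1): there are $R,\underline{\sigma}>0$ with $\sigma_{\min}(\mathrm{D}h(x))\ge\underline{\sigma}$ for all $x\in\mathcal{C}=\{x:\|h(x)\|\le R\}$. (A2): $\{h=0\}$ and $\mathcal{C}$ are compact. (A3): there is $C_h>0$ with $h(x+v)=h(x)+\mathrm{D}h(x)[v]+E(x,v)$,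 $\|E(x,v)\|\le C_h\|v\|^2$ for all $x\in\mathcal{C}$, $v\in\mathcal{E}$. For $x\in\mathcal{C}$: $C_\lambda(x)=\|\mathrm{D}\lambda(x)\|_{\mathrm{op}}$, $\beta_1(x)=\sigma_1(\mathrm{D}h(x))C_\lambda(x)/(2\sigma_{\min}(\mathrm{D}h(x))^2)$, and $t_1(x)=\min\big(\sqrt{R/(2C_h)}/\|\nabla g(x)\|,\ (2\beta\sigma_{\min}(\mathrm{D}h(x))^2-\sigma_1(\mathrm{D}h(x))C_\lambda(x))R/(2C_h\|\nabla g(x)\|^2),\ 1/(2\beta\|\mathrm{D}h(x)\|_{\mathrm{op}}^2)\big)$. $L_g=\max_{x\in\mathcal{C}}\|\nabla^2g(x)\|_{\mathrm{op}}$. Gradient-step backtracking: given $x\in\mathcal{C}$ and parameters $\alpha_{01}>0$, $0<c_1<1$, $0<\tau_1<1$, set $\alpha=\alpha_{01}$; while it is not the case that both $g(x)-g(x-\alpha\nabla g(x))\ge c_1\alpha\|\nabla g(x)\|^2$ and $x-\alpha\nabla g(x)\in\mathcal{C}$, replace $\alpha$ by $\tau_1\alpha$; return $t=\alpha$. *)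

theory Defs
  imports "HOL-Analysis.Analysis"
begin

fun Ck :: "nat \<Rightarrow> ('a::real_normed_vector \<Rightarrow> 'b::real_normed_vector) \<Rightarrow> bool" where
  "Ck 0 F = continuous_on UNIV F"
| "Ck (Suc k) F = ((\<forall>x. F differentiable (at x)) \<and>
      (\<forall>v. Ck k (\<lambda>x. frechet_derivative F (at x) v)))"

definition smooth :: "('a::real_normed_vector \<Rightarrow> 'b::real_normed_vector) \<Rightarrow> bool" where
  "smooth F \<longleftrightarrow> (\<forall>k. Ck k F)"

definition Dif :: "('a::real_normed_vector \<Rightarrow> 'b::real_normed_vector) \<Rightarrow> 'a \<Rightarrow> 'a \<Rightarrow> 'b" where
  "Dif F x = frechet_derivative F (at x)"

definition grad :: "('a::real_inner \<Rightarrow> real) \<Rightarrow> 'a \<Rightarrow> 'a" where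
  "grad F x = (THE D. GDERIV F x :> D)"

text \<open>k-th singular value (k \<ge> 1) of a linear map, via the Courant--Fischer max-min
  characterisation; it is 0 when k exceeds the dimension of the domain.\<close>
definition sing_val :: "nat \<Rightarrow> ('a::euclidean_space \<Rightarrow> 'b::euclidean_space) \<Rightarrow> real" where
  "sing_val k L = (if 1 \<le> k \<and> k \<le> DIM('a) then
      Sup ((\<lambda>V. Inf ((\<lambda>v. norm (L v)) ` {v\<in>V. norm v = 1}))
            ` {V. subspace V \<and> dim V = k})
    else 0)"

definition sigma_max :: "('a::euclidean_space \<Rightarrow> 'b::euclidean_space) \<Rightarrow> real" where
  "sigma_max L = sing_val 1 L"

definition sigma_min :: "('a::euclidean_space \<Rightarrow> 'b::euclidean_space) \<Rightarrow> real" where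
  "sigma_min L = sing_val DIM('b) L"

definition lsq :: "('a::real_normed_vector \<Rightarrow> 'b::real_normed_vector) \<Rightarrow> 'b \<Rightarrow> 'a \<Rightarrow> bool" where
  "lsq A y u \<longleftrightarrow> (\<forall>w. norm (A u - y) \<le> norm (A w - y))"

definition pinv :: "('a::real_normed_vector \<Rightarrow> 'b::real_normed_vector) \<Rightarrow> 'b \<Rightarrow> 'a" where
  "pinv A y = (THE u. lsq A y u \<and> (\<forall>w. lsq A y w \<longrightarrow> norm u \<le> norm w))"

definition Dset :: "('a::euclidean_space \<Rightarrow> 'b::euclidean_space) \<Rightarrow> 'a set" where
  "Dset h = {x. dim (range (Dif h x)) = DIM('b)}"

text \<open>lambda(x) = (Dh(x)^* )^\<dagger> [grad f(x)]  (meaningful on Dset h).\<close>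
definition lam :: "('a::euclidean_space \<Rightarrow> real) \<Rightarrow> ('a \<Rightarrow> 'b::euclidean_space) \<Rightarrow> 'a \<Rightarrow> 'b" where
  "lam f h x = pinv (adjoint (Dif h x)) (grad f x)"

definition gfun :: "('a::euclidean_space \<Rightarrow> real) \<Rightarrow> ('a \<Rightarrow> 'b::euclidean_space) \<Rightarrow> real \<Rightarrow> 'a \<Rightarrow> real" where
  "gfun f h \<beta> x = f x - inner (h x) (lam f h x) + \<beta> * (norm (h x))\<^sup>2"

definition Cset :: "('a::real_normed_vector \<Rightarrow> 'b::real_normed_vector) \<Rightarrow> real \<Rightarrow> 'a set" where
  "Cset h R = {x. norm (h x) \<le> R}"

definition C_lam :: "('a::euclidean_space \<Rightarrow> real) \<Rightarrow> ('a \<Rightarrow> 'b::euclidean_space) \<Rightarrow> 'a \<Rightarrow> real" where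
  "C_lam f h x = onorm (Dif (lam f h) x)"

definition beta1 :: "('a::euclidean_space \<Rightarrow> real) \<Rightarrow> ('a \<Rightarrow> 'b::euclidean_space) \<Rightarrow> 'a \<Rightarrow> real" where
  "beta1 f h x = sigma_max (Dif h x) * C_lam f h x / (2 * (sigma_min (Dif h x))\<^sup>2)"

text \<open>t_1(x); when grad g(x) = 0 the first two terms (positive numbers divided by 0)
  are read as +infinity and dropped from the minimum.\<close>
definition t1 :: "('a::euclidean_space \<Rightarrow> real) \<Rightarrow> ('a \<Rightarrow> 'b::euclidean_space) \<Rightarrow> real \<Rightarrow> real \<Rightarrow> real \<Rightarrow> 'a \<Rightarrow> real" where
  "t1 f h \<beta> R Ch x =
    (let G = grad (gfun f h \<beta>) x;
         third = 1 / (2 * \<beta> * (onorm (Dif h x))\<^sup>2)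
     in if G = 0 then third
        else min (min (sqrt (R / (2 * Ch)) / norm G)
                      ((2 * \<beta> * (sigma_min (Dif h x))\<^sup>2 - sigma_max (Dif h x) * C_lam f h x) * R
                         / (2 * Ch * (norm G)\<^sup>2)))
                 third)"

definition Lg :: "('a::euclidean_space \<Rightarrow> real) \<Rightarrow> ('a \<Rightarrow> 'b::euclidean_space) \<Rightarrow> real \<Rightarrow> real \<Rightarrow> real" where
  "Lg f h \<beta> R = (SUP x\<in>Cset h R. onorm (Dif (grad (gfun f h \<beta>)) x))"

text \<open>underline alpha_1 = min(alpha_01, 2(1-c_1)/L_g); 2(1-c_1)/0 read as +infinity.\<close>
definition alpha1 :: "('a::euclidean_space \<Rightarrow> real) \<Rightarrow> ('a \<Rightarrow> 'b::euclidean_space) \<Rightarrow> real \<Rightarrow> real \<Rightarrow> real \<Rightarrow> real \<Rightarrow> real" where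
  "alpha1 f h \<beta> R a01 c1 =
    (if Lg f h \<beta> R = 0 then a01 else min a01 (2 * (1 - c1) / Lg f h \<beta> R))"

definition bt_accept :: "('a::euclidean_space \<Rightarrow> real) \<Rightarrow> ('a \<Rightarrow> 'b::euclidean_space) \<Rightarrow> real \<Rightarrow> real \<Rightarrow> real \<Rightarrow> 'a \<Rightarrow> real \<Rightarrow> bool" where
  "bt_accept f h \<beta> R c1 x \<alpha> \<longleftrightarrow>
     (let g = gfun f h \<beta>; G = grad g x in
      g x - g (x - \<alpha> *\<^sub>R G) \<ge> c1 * \<alpha> * (norm G)\<^sup>2 \<and> x - \<alpha> *\<^sub>R G \<in> Cset h R)"

text \<open>The loop tries alpha_01 * tau_1^k for k = 0,1,2,...; it terminates iff some trial is
  accepted, and then returns the first accepted one.\<close>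
definition bt_terminates :: "('a::euclidean_space \<Rightarrow> real) \<Rightarrow> ('a \<Rightarrow> 'b::euclidean_space) \<Rightarrow> real \<Rightarrow> real \<Rightarrow> real \<Rightarrow> real \<Rightarrow> real \<Rightarrow> 'a \<Rightarrow> bool" where
  "bt_terminates f h \<beta> R a01 c1 \<tau>1 x \<longleftrightarrow> (\<exists>k. bt_accept f h \<beta> R c1 x (a01 * \<tau>1 ^ k))"

definition bt_step :: "('a::euclidean_space \<Rightarrow> real) \<Rightarrow> ('a \<Rightarrow> 'b::euclidean_space) \<Rightarrow> real \<Rightarrow> real \<Rightarrow> real \<Rightarrow> real \<Rightarrow> real \<Rightarrow> 'a \<Rightarrow> real" where
  "bt_step f h \<beta> R a01 c1 \<tau>1 x = a01 * \<tau>1 ^ (LEAST k. bt_accept f h \<beta> R c1 x (a01 * \<tau>1 ^ k))"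

end

theory Submission
  imports Defs
begin

text \<open>On \<open>C\<close> the Jacobian \<open>Dh\<close> has full rank, so \<open>\<lambda>\<close>, which solves the normal equations
  \<open>Dh Dh\<^sup>* \<lambda> = Dh \<nabla>f\<close>, is smooth there, and so is \<open>g\<close>, with
  \<open>\<nabla>g = \<nabla>f - Dh\<^sup>* \<lambda> - D\<lambda>\<^sup>* h + 2 \<beta> Dh\<^sup>* h\<close>. By the normal equations
  \<open>Dh \<nabla>g = 2 \<beta> Dh Dh\<^sup>* h - Dh D\<lambda>\<^sup>* h\<close>, so a step \<open>x - t \<nabla>g x\<close> changes \<open>h\<close> by the contraction
  \<open>I - 2 \<beta> t Dh Dh\<^sup>*\<close> (factor \<open>1 - 2 \<beta> t \<sigma>\<^sub>m\<^sup>2\<close>), a perturbation of size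
  \<open>t \<sigma>\<^sub>1 C\<^sub>\<lambda> \<parallel>h\<parallel>\<close> and a Taylor remainder \<open>C\<^sub>h t\<^sup>2 \<parallel>\<nabla>g\<parallel>\<^sup>2\<close>. For \<open>\<beta> > \<beta>\<^sub>1\<close> the contraction
  wins, and \<open>t \<le> t\<^sub>1\<close> keeps \<open>\<parallel>h\<parallel> \<le> R\<close>: the whole segment stays in \<open>C\<close>. There the Hessian of \<open>g\<close>
  is bounded by \<open>L\<^sub>g\<close> (compactness), so the descent lemma gives the Armijo condition for
  every \<open>\<alpha> \<le> min(\<alpha>\<^sub>1, t\<^sub>1)\<close>; backtracking thus stops no later than the first trial step
  below this bound, which is at least \<open>\<tau>\<^sub>1 min(\<alpha>\<^sub>1, t\<^sub>1)\<close>.\<close>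

section \<open>\<open>C\<^sup>k\<close> maps on open sets\<close>

text \<open>\<open>Ck\<close> localised to an open set: \<open>\<lambda>\<close> is smooth only where \<open>Dh\<close> has full rank.\<close>
fun Ck_on :: "nat \<Rightarrow> 'a set \<Rightarrow> ('a::real_normed_vector \<Rightarrow> 'b::real_normed_vector) \<Rightarrow> bool" where
  "Ck_on 0 U F = continuous_on U F"
| "Ck_on (Suc k) U F = ((\<forall>x\<in>U. F differentiable (at x)) \<and> (\<forall>v. Ck_on k U (\<lambda>x. Dif F x v)))"

lemma Dif_eqI: "(F has_derivative F') (at x) \<Longrightarrow> Dif F x = F'"
  unfolding Dif_def by (rule frechet_derivative_at[symmetric])

lemma Ck_on_has_derivative: "Ck_on (Suc k) U F \<Longrightarrow> x \<in> U \<Longrightarrow> (F has_derivative Dif F x) (at x)"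
  by (auto simp: Dif_def intro!: frechet_derivative_works[THEN iffD1])

lemma Ck_on_SucD: "Ck_on (Suc k) U F \<Longrightarrow> Ck_on k U F"
proof (induction k arbitrary: F)
  case 0
  then show ?case
    by (auto intro!: continuous_at_imp_continuous_on differentiable_imp_continuous_within)
qed auto

lemma Ck_on_mono: "Ck_on k U F \<Longrightarrow> j \<le> k \<Longrightarrow> Ck_on j U F"
  by (induction k) (use Ck_on_SucD le_Suc_eq in blast)+

lemma Ck_on_imp_continuous_on: "Ck_on k U F \<Longrightarrow> continuous_on U F"
  using Ck_on_mono[of k U F 0] by simp

lemma Ck_imp_Ck_on: "Ck k F \<Longrightarrow> Ck_on k U F"
  by (induction k arbitrary: F) (auto intro: continuous_on_subset simp: Dif_def)

lemma smooth_imp_Ck_on: "smooth F \<Longrightarrow> Ck_on k U F"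
  unfolding smooth_def using Ck_imp_Ck_on by blast

lemma smooth_imp_Ck_on_Dif: "smooth F \<Longrightarrow> Ck_on k U (\<lambda>x. Dif F x v)"
proof -
  assume "smooth F"
  then have "Ck (Suc k) F" unfolding smooth_def by blast
  then show ?thesis unfolding Dif_def by (auto intro: Ck_imp_Ck_on)
qed

lemma smooth_has_derivative: "smooth F \<Longrightarrow> (F has_derivative Dif F x) (at x)"
  using Ck_on_has_derivative[of 0 UNIV F x] smooth_imp_Ck_on by blast

lemma Ck_on_cong: "open U \<Longrightarrow> (\<And>x. x \<in> U \<Longrightarrow> F x = G x) \<Longrightarrow> Ck_on k U F \<Longrightarrow> Ck_on k U G"
proof (induction k arbitrary: F G)
  case 0 then show ?case using continuous_on_cong by force
next
  case (Suc k)
  have G': "(G has_derivative Dif F x) (at x)" if "x \<in> U" for x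
    using has_derivative_transform_within_open[OF Ck_on_has_derivative[OF Suc.prems(3) that]
        Suc.prems(1) that] Suc.prems(2) by auto
  then have "Dif G x v = Dif F x v" if "x \<in> U" for x v
    using Dif_eqI that by metis
  then show ?case using Suc.prems G'
    by (auto intro!: Suc.IH[of "\<lambda>x. Dif F x v" "\<lambda>x. Dif G x v" for v] simp: differentiable_def)
      blast
qed

lemma Ck_on_SucI:
  assumes "open U" and "\<And>x. x \<in> U \<Longrightarrow> (F has_derivative F' x) (at x)"
    and "\<And>v. Ck_on k U (\<lambda>x. F' x v)"
  shows "Ck_on (Suc k) U F"
proof -
  have "Ck_on k U (\<lambda>x. Dif F x v)" for v
    by (rule Ck_on_cong[OF assms(1) _ assms(3)]) (use assms(2) Dif_eqI in fastforce)
  then show ?thesis using assms(2) by (auto simp: differentiable_def)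
qed

lemma Ck_on_const: "Ck_on k U (\<lambda>x. c)"
proof (induction k arbitrary: c)
  case (Suc k)
  then show ?case
    by (simp add: differentiable_const Dif_eqI[OF has_derivative_const])
qed simp

lemma Ck_on_add: "open U \<Longrightarrow> Ck_on k U F \<Longrightarrow> Ck_on k U G \<Longrightarrow> Ck_on k U (\<lambda>x. F x + G x)"
proof (induction k arbitrary: F G)
  case 0 then show ?case by (simp add: continuous_on_add)
next
  case (Suc k)
  show ?case
    by (rule Ck_on_SucI[OF Suc.prems(1) has_derivative_add[OF Ck_on_has_derivative
          Ck_on_has_derivative]]) (use Suc in auto)
qed

lemma Ck_on_bilinear:
  fixes prod :: "'b::real_normed_vector \<Rightarrow> 'c::real_normed_vector \<Rightarrow> 'd::real_normed_vector"
  assumes "bounded_bilinear prod"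
  shows "open U \<Longrightarrow> Ck_on k U F \<Longrightarrow> Ck_on k U G \<Longrightarrow> Ck_on k U (\<lambda>x. prod (F x) (G x))"
proof (induction k arbitrary: F G)
  case 0 then show ?case by (simp add: bounded_bilinear.continuous_on[OF assms])
next
  case (Suc k)
  have "Ck_on k U F" "Ck_on k U G"
    using Suc.prems Ck_on_SucD by blast+
  then show ?case
    by (intro Ck_on_SucI[OF Suc.prems(1) bounded_bilinear.FDERIV[OF assms Ck_on_has_derivative
          Ck_on_has_derivative]]) (use Suc in \<open>auto intro!: Ck_on_add\<close>)
qed

lemmas Ck_on_scaleR = Ck_on_bilinear[OF bounded_bilinear_scaleR]
lemmas Ck_on_inner = Ck_on_bilinear[OF bounded_bilinear_inner]
lemmas Ck_on_mult = Ck_on_bilinear[OF bounded_bilinear_mult]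

lemma Ck_on_diff: "open U \<Longrightarrow> Ck_on k U F \<Longrightarrow> Ck_on k U G \<Longrightarrow> Ck_on k U (\<lambda>x. F x - G x)"
  using Ck_on_add[of U k F "\<lambda>x. (-1) *\<^sub>R G x"] Ck_on_scaleR[OF _ Ck_on_const, of U k G "-1"]
  by simp

lemma Ck_on_sum:
  assumes "open U" "finite S" "\<And>i. i \<in> S \<Longrightarrow> Ck_on k U (F i)"
  shows "Ck_on k U (\<lambda>x. \<Sum>i\<in>S. F i x)"
  using assms(2,3) by (induction S rule: finite_induct) (auto intro: Ck_on_const Ck_on_add assms(1))

section \<open>Linear systems with smoothly varying coefficients\<close>

lemma linear_eq_sum_Basis:
  fixes L :: "'a::euclidean_space \<Rightarrow> 'b::real_vector"
  assumes "linear L"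
  shows "L u = (\<Sum>b\<in>Basis. (u \<bullet> b) *\<^sub>R L b)"
proof -
  have "L u = L (\<Sum>b\<in>Basis. (u \<bullet> b) *\<^sub>R b)" by (simp add: euclidean_representation)
  then show ?thesis
    using assms by (simp add: linear_sum linear_scale)
qed

lemma norm_linear_diff_le:
  fixes L M :: "'a::euclidean_space \<Rightarrow> 'b::real_normed_vector"
  assumes "linear L" "linear M"
  shows "norm (L u - M u) \<le> norm u * (\<Sum>b\<in>Basis. norm (L b - M b))"
proof -
  have "L u - M u = (\<Sum>b\<in>Basis. (u \<bullet> b) *\<^sub>R (L b - M b))"
    using linear_eq_sum_Basis[OF assms(1), of u] linear_eq_sum_Basis[OF assms(2), of u]
    by (simp add: scaleR_diff_right sum_subtractf)
  also have "norm \<dots> \<le> (\<Sum>b\<in>Basis. norm u * norm (L b - M b))"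
    by (rule order_trans[OF norm_sum sum_mono]) (simp add: Basis_le_norm mult_right_mono)
  finally show ?thesis by (simp add: sum_distrib_left)
qed

lemma continuous_at_linear_family_apply:
  fixes A :: "'a::real_normed_vector \<Rightarrow> 'b::euclidean_space \<Rightarrow> 'c::real_normed_vector"
  assumes "\<And>z. linear (A z)" and "\<And>b. b \<in> Basis \<Longrightarrow> continuous (at z0) (\<lambda>z. A z b)"
  shows "continuous (at z0) (\<lambda>z. A z u)"
proof -
  have "continuous (at z0) (\<lambda>z. \<Sum>b\<in>Basis. (u \<bullet> b) *\<^sub>R A z b)"
    by (intro continuous_intros assms(2))
  then show ?thesis
    using linear_eq_sum_Basis[OF assms(1), of _ u] by simp
qed

lemma linear_family_bounded_below_near:
  fixes A :: "'a::real_normed_vector \<Rightarrow> 'b::euclidean_space \<Rightarrow> 'b"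
  assumes lin: "\<And>z. linear (A z)" and cont: "\<And>b. b \<in> Basis \<Longrightarrow> continuous (at z0) (\<lambda>z. A z b)"
    and inj: "inj (A z0)"
  obtains c d where "c > 0" "d > 0" "\<And>z u. dist z z0 < d \<Longrightarrow> c * norm u \<le> norm (A z u)"
proof -
  obtain c0 where c0: "c0 > 0" "\<And>u. c0 * norm u \<le> norm (A z0 u)"
    using linear_inj_bounded_below_pos[OF lin inj] by blast
  define S where "S z = (\<Sum>b\<in>Basis. norm (A z b - A z0 b))" for z
  have "continuous (at z0) S"
    unfolding S_def by (intro continuous_intros cont)
  then obtain d where d: "d > 0" "\<And>z. dist z z0 < d \<Longrightarrow> dist (S z) (S z0) < c0/2"
    unfolding continuous_at_eps_delta using c0(1) half_gt_zero by blast
  have "S z0 = 0" by (simp add: S_def)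
  have "c0/2 * norm u \<le> norm (A z u)" if "dist z z0 < d" for z u
  proof -
    have "norm (A z0 u - A z u) \<le> norm u * S z"
      unfolding S_def by (subst norm_minus_commute) (rule norm_linear_diff_le[OF lin lin])
    also have "\<dots> \<le> norm u * (c0/2)"
      using d(2)[OF that] \<open>S z0 = 0\<close> by (intro mult_left_mono) (auto simp: dist_real_def)
    finally show ?thesis
      using c0(2)[of u] norm_triangle_ineq2[of "A z0 u" "A z u"] by argo
  qed
  then show ?thesis using that[of "c0/2" d] c0(1) d(1) by simp
qed

lemma linear_solution_continuous_at:
  fixes A :: "'a::real_normed_vector \<Rightarrow> 'b::euclidean_space \<Rightarrow> 'b"
  assumes lin: "\<And>z. linear (A z)" and cont: "\<And>b. b \<in> Basis \<Longrightarrow> continuous (at z0) (\<lambda>z. A z b)"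
    and inj: "inj (A z0)" and wc: "continuous (at z0) w"
    and sol: "eventually (\<lambda>z. A z (u z) = w z) (at z0)" and sol0: "A z0 (u z0) = w z0"
  shows "continuous (at z0) u"
proof -
  obtain c d where cd: "c > 0" "d > 0" "\<And>z u. dist z z0 < d \<Longrightarrow> c * norm u \<le> norm (A z u)"
    using linear_family_bounded_below_near[OF lin cont inj] by blast
  have "eventually (\<lambda>z. dist z z0 < d) (at z0)"
    using cd(2) eventually_at by blast
  then have "eventually (\<lambda>z. norm (u z - u z0) \<le> norm (w z - A z (u z0)) / c) (at z0)"
    using sol
  proof eventually_elim
    case (elim z)
    have "c * norm (u z - u z0) \<le> norm (A z (u z - u z0))" using cd(3) elim(1) by blast
    also have "A z (u z - u z0) = w z - A z (u z0)" using elim(2) lin by (simp add: linear_diff)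
    finally show ?case using cd(1) by (simp add: field_simps)
  qed
  moreover have "((\<lambda>z. norm (w z - A z (u z0)) / c) \<longlongrightarrow> norm (w z0 - A z0 (u z0)) / c) (at z0)"
    using wc continuous_at_linear_family_apply[OF lin cont, of "u z0"]
    by (intro tendsto_intros) (use cd(1) in \<open>auto simp: continuous_at\<close>)
  then have "((\<lambda>z. norm (w z - A z (u z0)) / c) \<longlongrightarrow> 0) (at z0)"
    by (simp add: sol0)
  ultimately have "((\<lambda>z. u z - u z0) \<longlongrightarrow> 0) (at z0)"
    by (rule Lim_null_comparison)
  then show ?thesis unfolding continuous_at by (rule LIM_zero_cancel)
qed

lemma has_derivative_bilinear_vanishing:
  fixes prod :: "'b::real_normed_vector \<Rightarrow> 'c::real_normed_vector \<Rightarrow> 'd::real_normed_vector"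
  assumes bil: "bounded_bilinear prod" and c: "continuous (at x) c"
    and \<phi>: "(\<phi> has_derivative \<phi>') (at x)" and \<phi>0: "\<phi> x = 0"
  shows "((\<lambda>y. prod (c y) (\<phi> y)) has_derivative (\<lambda>v. prod (c x) (\<phi>' v))) (at x)"
proof -
  interpret prod: bounded_bilinear prod by (fact bil)
  have bl: "bounded_linear \<phi>'" using \<phi> has_derivative_bounded_linear by blast
  define q where "q y = (\<phi> y - \<phi> x - \<phi>' (y - x)) /\<^sub>R norm (y - x)" for y
  define e where "e y = \<phi>' (y - x) /\<^sub>R norm (y - x)" for y
  have q: "(q \<longlongrightarrow> 0) (at x)"
    using \<phi> unfolding q_def has_derivative_at_within by blast
  have "Zfun (\<lambda>y. c y - c x) (at x)"
    using c by (simp add: continuous_at tendsto_Zfun_iff)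
  moreover have "norm (e y) \<le> onorm \<phi>'" for y
    using onorm[OF bl, of "y - x"] onorm_pos_le[OF bl]
    by (cases "y = x") (auto simp: e_def field_simps)
  then have "Bfun e (at x)"
    by (intro BfunI always_eventually) blast
  ultimately have "Zfun (\<lambda>y. prod (c y - c x) (e y)) (at x)"
    by (rule prod.Zfun_prod_Bfun)
  then have "((\<lambda>y. prod (c y) (q y) + prod (c y - c x) (e y)) \<longlongrightarrow> prod (c x) 0 + 0) (at x)"
    using prod.tendsto[OF c[unfolded continuous_at] q] by (intro tendsto_add) (auto simp: tendsto_Zfun_iff)
  moreover have "prod (c y) (q y) + prod (c y - c x) (e y)
      = (prod (c y) (\<phi> y) - prod (c x) (\<phi> x) - prod (c x) (\<phi>' (y - x))) /\<^sub>R norm (y - x)" for y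
    unfolding q_def e_def \<phi>0
    by (simp add: prod.scaleR_right prod.diff_left prod.diff_right prod.zero_right algebra_simps)
  ultimately show ?thesis
    unfolding has_derivative_at_within
    by (auto intro: bounded_linear_compose[OF prod.bounded_linear_right bl] simp: prod.zero_right)
qed

text \<open>\<open>A z0 (u z) = w z - (A z - A z0) (u z)\<close>, and the last term is differentiable at \<open>z0\<close>
  although \<open>u\<close> is only continuous.\<close>
lemma linear_solution_has_derivative:
  fixes A :: "'a::real_normed_vector \<Rightarrow> 'b::euclidean_space \<Rightarrow> 'b"
  assumes lin: "\<And>z. linear (A z)"
    and dA: "\<And>b. b \<in> Basis \<Longrightarrow> ((\<lambda>z. A z b) has_derivative A' b) (at z0)"
    and inj: "inj (A z0)" and dw: "(w has_derivative w') (at z0)"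
    and uc: "continuous (at z0) u"
    and sol: "eventually (\<lambda>z. A z (u z) = w z) (at z0)" and sol0: "A z0 (u z0) = w z0"
  obtains L where "(u has_derivative L) (at z0)"
    and "\<And>v. A z0 (L v) = w' v - (\<Sum>b\<in>Basis. (u z0 \<bullet> b) *\<^sub>R A' b v)"
proof -
  obtain Ai where Ai: "linear Ai" "Ai \<circ> A z0 = id"
    using linear_injective_left_inverse[OF lin inj] by blast
  then have "A z0 \<circ> Ai = id" using linear_inverse_left[OF lin] by blast
  then have A_Ai: "A z0 (Ai y) = y" and Ai_A: "Ai (A z0 y) = y" for y
    using Ai(2) by (metis comp_apply id_apply)+
  define r where "r z = w z - (\<Sum>b\<in>Basis. (u z \<bullet> b) *\<^sub>R (A z b - A z0 b))" for z
  define r' where "r' v = w' v - (\<Sum>b\<in>Basis. (u z0 \<bullet> b) *\<^sub>R A' b v)" for v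
  have A_eq_r: "A z0 (u z) = r z" if "A z (u z) = w z" for z
    using that linear_eq_sum_Basis[OF lin, of z "u z"] linear_eq_sum_Basis[OF lin, of z0 "u z"]
    by (simp add: r_def scaleR_diff_right sum_subtractf)
  have "(r has_derivative r') (at z0)"
    unfolding r_def r'_def
    using has_derivative_bilinear_vanishing[OF bounded_bilinear_scaleR
        continuous_inner[OF uc continuous_const] has_derivative_diff[OF dA has_derivative_const]]
    by (intro has_derivative_diff dw has_derivative_sum) auto
  then have "((\<lambda>z. Ai (r z)) has_derivative (\<lambda>v. Ai (r' v))) (at z0)"
    using Ai(1) linear_conv_bounded_linear bounded_linear.has_derivative by blast
  moreover have "eventually (\<lambda>z. Ai (r z) = u z) (at z0)"
    using sol by eventually_elim (simp add: A_eq_r Ai_A flip: A_eq_r)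
  ultimately have "(u has_derivative (\<lambda>v. Ai (r' v))) (at z0)"
    by (rule has_derivative_transform_eventually) (simp_all add: A_eq_r[OF sol0, symmetric] Ai_A)
  then show ?thesis using that A_Ai unfolding r'_def by blast
qed

lemma linear_solution_continuous_on:
  fixes A :: "'a::real_normed_vector \<Rightarrow> 'b::euclidean_space \<Rightarrow> 'b"
  assumes U: "open U" and lin: "\<And>z. linear (A z)" and inj: "\<And>z. z \<in> U \<Longrightarrow> inj (A z)"
    and contA: "\<And>b. b \<in> Basis \<Longrightarrow> continuous_on U (\<lambda>z. A z b)" and contw: "continuous_on U w"
    and sol: "\<And>z. z \<in> U \<Longrightarrow> A z (u z) = w z"
  shows "continuous_on U u"
proof -
  have "continuous (at z0) u" if z0: "z0 \<in> U" for z0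
  proof (rule linear_solution_continuous_at[where A=A, OF lin _ inj[OF z0]])
    show "continuous (at z0) (\<lambda>z. A z b)" if "b \<in> Basis" for b
      using contA[OF that] U z0 continuous_on_eq_continuous_at by auto
    show "continuous (at z0) w" using contw U z0 continuous_on_eq_continuous_at by auto
    show "eventually (\<lambda>z. A z (u z) = w z) (at z0)"
      using eventually_at_in_open'[OF U z0] by eventually_elim (rule sol)
  qed (use sol z0 in auto)
  then show ?thesis by (simp add: continuous_at_imp_continuous_on)
qed

lemma linear_solution_Dif:
  fixes A :: "'a::real_normed_vector \<Rightarrow> 'b::euclidean_space \<Rightarrow> 'b"
  assumes U: "open U" and z: "z \<in> U" and lin: "\<And>z. linear (A z)" and inj: "inj (A z)"
    and dA: "\<And>b. b \<in> Basis \<Longrightarrow> ((\<lambda>z. A z b) has_derivative Dif (\<lambda>z. A z b) z) (at z)"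
    and dw: "(w has_derivative Dif w z) (at z)" and contu: "continuous_on U u"
    and sol: "\<And>z. z \<in> U \<Longrightarrow> A z (u z) = w z"
  shows "(u has_derivative Dif u z) (at z)"
    and "A z (Dif u z v) = Dif w z v - (\<Sum>b\<in>Basis. (u z \<bullet> b) *\<^sub>R Dif (\<lambda>z. A z b) z v)"
proof -
  have uc: "continuous (at z) u"
    using contu U z continuous_on_eq_continuous_at by blast
  have ev: "eventually (\<lambda>y. A y (u y) = w y) (at z)"
    using eventually_at_in_open'[OF U z] by eventually_elim (rule sol)
  obtain L where L: "(u has_derivative L) (at z)"
    "\<And>v. A z (L v) = Dif w z v - (\<Sum>b\<in>Basis. (u z \<bullet> b) *\<^sub>R Dif (\<lambda>z. A z b) z v)"
    using linear_solution_has_derivative[OF lin dA inj dw uc ev sol[OF z]] by blast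
  moreover have "Dif u z = L" by (rule Dif_eqI[OF L(1)])
  ultimately show "(u has_derivative Dif u z) (at z)"
    and "A z (Dif u z v) = Dif w z v - (\<Sum>b\<in>Basis. (u z \<bullet> b) *\<^sub>R Dif (\<lambda>z. A z b) z v)"
    by simp_all
qed

text \<open>Differentiating \<open>A z (u z) = w z\<close> gives a system of the same kind for each
  directional derivative of \<open>u\<close>, with one derivative less on the right-hand side.\<close>
lemma Ck_on_linear_solution:
  fixes A :: "'a::real_normed_vector \<Rightarrow> 'b::euclidean_space \<Rightarrow> 'b"
  assumes U: "open U" and lin: "\<And>z. linear (A z)" and inj: "\<And>z. z \<in> U \<Longrightarrow> inj (A z)"
    and CkA: "\<And>b. b \<in> Basis \<Longrightarrow> Ck_on k U (\<lambda>z. A z b)" and Ckw: "Ck_on k U w"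
    and sol: "\<And>z. z \<in> U \<Longrightarrow> A z (u z) = w z"
  shows "Ck_on k U u"
  using CkA Ckw sol
proof (induction k arbitrary: w u)
  case 0
  show ?case
    unfolding Ck_on.simps
    by (rule linear_solution_continuous_on[where w=w, OF U lin inj]) (use 0 in simp_all)
next
  case (Suc k)
  have CkA: "Ck_on k U (\<lambda>z. A z b)" if "b \<in> Basis" for b
    using Suc.prems(1)[OF that] Ck_on_SucD by blast
  have Cku: "Ck_on k U u"
    using Suc.IH[OF CkA Ck_on_SucD[OF Suc.prems(2)] Suc.prems(3)] by blast
  have Du: "(u has_derivative Dif u z) (at z)"
    "A z (Dif u z v) = Dif w z v - (\<Sum>b\<in>Basis. (u z \<bullet> b) *\<^sub>R Dif (\<lambda>z. A z b) z v)"
    if z: "z \<in> U" for z v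
  proof -
    have dA: "((\<lambda>z. A z b) has_derivative Dif (\<lambda>z. A z b) z) (at z)" if "b \<in> Basis" for b
      using Ck_on_has_derivative[OF Suc.prems(1)[OF that] z] .
    show "(u has_derivative Dif u z) (at z)"
      "A z (Dif u z v) = Dif w z v - (\<Sum>b\<in>Basis. (u z \<bullet> b) *\<^sub>R Dif (\<lambda>z. A z b) z v)"
      using linear_solution_Dif[where A=A, OF U z lin inj[OF z] dA
            Ck_on_has_derivative[OF Suc.prems(2) z] Ck_on_imp_continuous_on[OF Cku] Suc.prems(3)]
      by blast+
  qed
  show ?case
  proof (rule Ck_on_SucI[OF U Du(1)])
    fix v
    have rhs: "Ck_on k U (\<lambda>z. Dif w z v - (\<Sum>b\<in>Basis. (u z \<bullet> b) *\<^sub>R Dif (\<lambda>z. A z b) z v))"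
      using Suc.prems(1,2) Cku
      by (intro Ck_on_diff Ck_on_sum Ck_on_scaleR Ck_on_inner Ck_on_const U) auto
    show "Ck_on k U (\<lambda>z. Dif u z v)"
      by (rule Suc.IH[OF CkA rhs]) (simp_all add: Du(2))
  qed
qed

section \<open>Adjoints and least squares\<close>

lemma norm_adjoint_le_onorm:
  fixes L :: "'a::euclidean_space \<Rightarrow> 'b::euclidean_space"
  assumes lin: "linear L"
  shows "norm (adjoint L y) \<le> onorm L * norm y"
proof -
  have bl: "bounded_linear L" using lin linear_conv_bounded_linear by blast
  have "norm (adjoint L y)^2 = L (adjoint L y) \<bullet> y"
    using adjoint_works[OF lin, of "adjoint L y" y] by (simp add: power2_norm_eq_inner)
  also have "\<dots> \<le> norm (L (adjoint L y)) * norm y" by (rule Cauchy_Schwarz_ineq2[THEN abs_le_D1])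
  also have "\<dots> \<le> onorm L * norm (adjoint L y) * norm y" using onorm[OF bl] by (simp add: mult_right_mono)
  finally have "norm (adjoint L y) * norm (adjoint L y) \<le> (onorm L * norm y) * norm (adjoint L y)"
    by (simp add: power2_eq_square algebra_simps)
  then show ?thesis
    by (cases "adjoint L y = 0") (auto simp: onorm_pos_le[OF bl] mult_le_cancel_right)
qed

lemma adjoint_eq_sum_Basis:
  fixes L :: "'a::euclidean_space \<Rightarrow> 'b::euclidean_space"
  assumes "linear L"
  shows "adjoint L u = (\<Sum>i\<in>Basis. (L i \<bullet> u) *\<^sub>R i)"
  using euclidean_representation[of "adjoint L u"] adjoint_works[OF assms]
  by (simp add: inner_commute)

lemma nonneg_quadratic_imp_sq_le:
  fixes a b d :: real
  assumes q: "\<And>t. 0 \<le> a + 2*t*b + t^2*d" and d: "d \<ge> 0"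
  shows "b^2 \<le> a*d"
proof (cases "d = 0")
  case True
  have "b = 0"
  proof (rule ccontr)
    assume b: "b \<noteq> 0"
    have "0 \<le> a + 2*(-(a+1)/(2*b))*b" using q[of "-(a+1)/(2*b)"] True by simp
    also have "\<dots> = -1" using b by (simp add: field_simps)
    finally show False by simp
  qed
  then show ?thesis using True by simp
next
  case False
  then have dp: "d > 0" using d by simp
  have "0 \<le> a + 2*(-b/d)*b + (-b/d)^2*d" by (rule q)
  also have "\<dots> = a - b^2/d" using dp by (simp add: field_simps power2_eq_square)
  finally show ?thesis using dp by (simp add: field_simps)
qed

text \<open>Cauchy--Schwarz for the semi-inner product \<open>M x \<bullet> z\<close> replaces the spectral theorem.\<close>
lemma norm_selfadjoint_le:
  fixes M :: "'a::euclidean_space \<Rightarrow> 'a"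
  assumes lin: "linear M" and sym: "\<And>x z. M x \<bullet> z = x \<bullet> M z"
    and nonneg: "\<And>z. 0 \<le> M z \<bullet> z" and upper: "\<And>z. M z \<bullet> z \<le> \<mu> * (norm z)^2"
  shows "norm (M y) \<le> \<mu> * norm y"
proof -
  have \<mu>: "\<mu> \<ge> 0"
  proof -
    obtain b :: 'a where "b \<in> Basis" using nonempty_Basis by blast
    then show ?thesis using nonneg[of b] upper[of b] by simp
  qed
  have CS: "(M x \<bullet> z)^2 \<le> (M x \<bullet> x) * (M z \<bullet> z)" for x z
  proof (rule nonneg_quadratic_imp_sq_le[OF _ nonneg])
    fix t
    have "M (x + t *\<^sub>R z) \<bullet> (x + t *\<^sub>R z) = M x \<bullet> x + 2*t*(M x \<bullet> z) + t^2 * (M z \<bullet> z)"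
      using lin sym[of z x]
      by (simp add: linear_add linear_scale inner_add_left inner_add_right inner_commute
          power2_eq_square algebra_simps)
    then show "0 \<le> M x \<bullet> x + 2*t*(M x \<bullet> z) + t^2 * (M z \<bullet> z)" using nonneg by metis
  qed
  define n where "n = norm (M y)"
  have "n^2 * n^2 = (M y \<bullet> M y)^2" by (simp add: n_def dot_square_norm)
  also have "\<dots> \<le> (M y \<bullet> y) * (M (M y) \<bullet> M y)" using CS[of y "M y"] sym by simp
  also have "\<dots> \<le> (\<mu> * (norm y)^2) * (\<mu> * n^2)"
    using upper nonneg \<mu> by (intro mult_mono) (auto simp: n_def)
  finally have sq: "n^2 * n^2 \<le> (\<mu> * norm y)^2 * n^2" by (simp add: power2_eq_square algebra_simps)
  have "n^2 \<le> (\<mu> * norm y)^2"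
  proof (cases "n = 0")
    case False
    then show ?thesis by (intro mult_right_le_imp_le[OF sq]) simp
  qed simp
  then show ?thesis using \<mu> by (simp add: n_def power2_le_iff_abs_le)
qed

lemma norm_diff_scaleR_adjoint_le:
  fixes L :: "'a::euclidean_space \<Rightarrow> 'b::euclidean_space"
  assumes lin: "linear L" and low: "\<And>y. s * norm y \<le> norm (adjoint L y)" and s: "s \<ge> 0"
    and c: "c \<ge> 0" "c * (onorm L)^2 \<le> 1"
  shows "norm (y - c *\<^sub>R L (adjoint L y)) \<le> (1 - c * s^2) * norm y"
proof (rule norm_selfadjoint_le)
  have quad: "(z - c *\<^sub>R L (adjoint L z)) \<bullet> z = (norm z)^2 - c * (norm (adjoint L z))^2" for z
    using adjoint_works[OF lin, of "adjoint L z" z]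
    by (simp add: inner_diff_left power2_norm_eq_inner)
  show "linear (\<lambda>z. z - c *\<^sub>R L (adjoint L z))"
    using linear_add[OF lin] linear_scale[OF lin] linear_add[OF adjoint_linear[OF lin]]
      linear_scale[OF adjoint_linear[OF lin]]
    by (intro linearI) (simp_all add: algebra_simps)
  show "(x - c *\<^sub>R L (adjoint L x)) \<bullet> z = x \<bullet> (z - c *\<^sub>R L (adjoint L z))" for x z
    using adjoint_works[OF lin, of "adjoint L x" z] adjoint_works[OF lin, of "adjoint L z" x]
    by (simp add: inner_diff_left inner_diff_right inner_commute)
  show "0 \<le> (z - c *\<^sub>R L (adjoint L z)) \<bullet> z" for z
  proof -
    have "norm (adjoint L z) ^ 2 \<le> (onorm L * norm z)^2"
      using norm_adjoint_le_onorm[OF lin] by (simp add: power_mono)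
    then have "c * (norm (adjoint L z))^2 \<le> c * (onorm L)^2 * (norm z)^2"
      using c(1) by (simp add: mult_left_mono power_mult_distrib mult.assoc)
    also have "\<dots> \<le> (norm z)^2" using mult_right_mono[OF c(2), of "(norm z)^2"] by simp
    finally show ?thesis unfolding quad by simp
  qed
  show "(z - c *\<^sub>R L (adjoint L z)) \<bullet> z \<le> (1 - c * s^2) * (norm z)^2" for z
  proof -
    have "(s * norm z)^2 \<le> (norm (adjoint L z))^2" using low[of z] s by (simp add: power_mono)
    then have "c * (s * norm z)^2 \<le> c * (norm (adjoint L z))^2" using c(1) by (simp add: mult_left_mono)
    then show ?thesis unfolding quad by (simp add: algebra_simps power_mult_distrib)
  qed
qed

text \<open>Least-squares solutions are unique here, so the minimum-norm selection in \<open>pinv\<close> is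
  vacuous.\<close>
lemma pinv_adjoint_eqI:
  fixes L :: "'a::euclidean_space \<Rightarrow> 'b::euclidean_space"
  assumes lin: "linear L" and inj: "inj (\<lambda>u. L (adjoint L u))" and normal: "L (adjoint L u) = L y"
  shows "pinv (adjoint L) y = u"
proof -
  define A where "A = adjoint L"
  have linA: "linear A" unfolding A_def using adjoint_linear[OF lin] .
  have pythagoras: "norm (A w - y)^2 = norm (A u - y)^2 + norm (A (w - u))^2" for w
  proof -
    have "(A u - y) \<bullet> A (w - u) = L (A u - y) \<bullet> (w - u)"
      using adjoint_works[OF lin, of "A u - y" "w - u"] unfolding A_def by simp
    also have "L (A u - y) = 0" using normal lin unfolding A_def by (simp add: linear_diff)
    finally have orth: "orthogonal (A u - y) (A (w - u))" by (simp add: orthogonal_def)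
    have "A w - y = (A u - y) + A (w - u)" using linA by (simp add: linear_diff)
    then show ?thesis using norm_add_Pythagorean[OF orth] by (simp only:)
  qed
  have lsq_u: "lsq A y u"
    unfolding lsq_def
  proof
    fix w
    show "norm (A u - y) \<le> norm (A w - y)"
    proof (rule power2_le_imp_le)
      show "norm (A u - y)^2 \<le> norm (A w - y)^2"
        using pythagoras[of w] zero_le_power2[of "norm (A (w - u))"] by linarith
    qed simp
  qed
  have uniq: "w = u" if "lsq A y w" for w
  proof -
    have "norm (A w - y) \<le> norm (A u - y)" using that unfolding lsq_def by blast
    then have "norm (A w - y)^2 \<le> norm (A u - y)^2" by (simp add: power_mono)
    then have "A (w - u) = 0" using pythagoras[of w] by simp
    then have "L (A w) = L (A u)" using linA lin by (simp add: linear_diff)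
    then show "w = u" using inj unfolding A_def by (simp add: inj_def)
  qed
  show ?thesis
    unfolding pinv_def A_def[symmetric]
  proof (rule the_equality)
    show "lsq A y u \<and> (\<forall>w. lsq A y w \<longrightarrow> norm u \<le> norm w)" using lsq_u uniq by blast
  qed (use uniq in blast)
qed

section \<open>Singular values\<close>

definition min_gain :: "('a::real_normed_vector \<Rightarrow> 'b::real_normed_vector) \<Rightarrow> 'a set \<Rightarrow> real" where
  "min_gain L V = Inf ((\<lambda>v. norm (L v)) ` {v\<in>V. norm v = 1})"

lemma sing_val_eq_Sup_min_gain:
  "1 \<le> k \<Longrightarrow> k \<le> DIM('a) \<Longrightarrow>
    sing_val k (L :: 'a::euclidean_space \<Rightarrow> 'b::euclidean_space)
      = Sup (min_gain L ` {V. subspace V \<and> dim V = k})"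
  by (simp add: sing_val_def min_gain_def)

lemma exists_unit_in_subspace:
  fixes V :: "'a::euclidean_space set"
  assumes "subspace V" "dim V \<ge> 1"
  obtains v where "v \<in> V" "norm v = 1"
proof -
  have "V \<noteq> {0}" using assms by (metis dim_singleton le_numeral_extra(2) le_zero_eq one_neq_zero)
  then obtain v where v: "v \<in> V" "v \<noteq> 0" using assms(1) subspace_0 by blast
  then have "v /\<^sub>R norm v \<in> V" "norm (v /\<^sub>R norm v) = 1" using assms(1) by (auto simp: subspace_scale)
  then show ?thesis using that by blast
qed

lemma min_gain_mult_norm_le:
  fixes L :: "'a::euclidean_space \<Rightarrow> 'b::real_normed_vector"
  assumes lin: "linear L" and V: "subspace V" "v \<in> V"
  shows "min_gain L V * norm v \<le> norm (L v)"
proof (cases "v = 0")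
  case True then show ?thesis using lin by (simp add: linear_0)
next
  case False
  have "v /\<^sub>R norm v \<in> V" "norm (v /\<^sub>R norm v) = 1" using False V by (auto simp: subspace_scale)
  then have "min_gain L V \<le> norm (L (v /\<^sub>R norm v))"
    unfolding min_gain_def by (intro cInf_lower) (auto intro!: bdd_belowI2[where m=0])
  also have "\<dots> = norm (L v) / norm v" using lin by (simp add: linear_scale divide_inverse_commute)
  finally show ?thesis using False by (simp add: le_divide_eq)
qed

lemma bdd_above_min_gain:
  fixes L :: "'a::euclidean_space \<Rightarrow> 'b::real_normed_vector"
  assumes lin: "linear L" and k: "1 \<le> k"
  shows "bdd_above (min_gain L ` {V. subspace V \<and> dim V = k})"
proof (rule bdd_aboveI2)
  fix V :: "'a set" assume V: "V \<in> {V. subspace V \<and> dim V = k}"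
  then obtain v where v: "v \<in> V" "norm v = 1" using exists_unit_in_subspace k by auto
  have "norm (L v) \<le> onorm L * norm v" using onorm lin linear_conv_bounded_linear by blast
  then show "min_gain L V \<le> onorm L"
    using min_gain_mult_norm_le[OF lin _ v(1)] V v by auto
qed

lemma norm_le_sigma_max:
  fixes L :: "'a::euclidean_space \<Rightarrow> 'b::euclidean_space"
  assumes lin: "linear L"
  shows "norm (L v) \<le> sigma_max L * norm v"
proof (cases "v = 0")
  case True then show ?thesis using lin by (simp add: linear_0)
next
  case False
  have k: "1 \<le> (1::nat)" "1 \<le> DIM('a)" by (auto simp: DIM_positive)
  define V where "V = span {v}"
  have V: "subspace V" "dim V = 1" using False by (auto simp: V_def)
  have "norm (L v) / norm v \<le> min_gain L V"
    unfolding min_gain_def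
  proof (rule cInf_greatest)
    show "(\<lambda>v. norm (L v)) ` {w\<in>V. norm w = 1} \<noteq> {}"
      using exists_unit_in_subspace[OF V(1)] V(2) by force
    fix g assume "g \<in> (\<lambda>v. norm (L v)) ` {w\<in>V. norm w = 1}"
    then obtain a where "g = norm (L (a *\<^sub>R v))" "\<bar>a\<bar> * norm v = 1"
      unfolding V_def by (auto simp: span_singleton)
    moreover from this(2) have "\<bar>a\<bar> = 1 / norm v" using False by (simp add: field_simps)
    ultimately show "norm (L v) / norm v \<le> g" using lin by (simp add: linear_scale)
  qed
  also have "\<dots> \<le> sigma_max L"
    unfolding sigma_max_def sing_val_eq_Sup_min_gain[OF k]
    by (rule cSup_upper) (use V bdd_above_min_gain[OF lin] in auto)
  finally show ?thesis using False by (simp add: divide_le_eq)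
qed

lemma sigma_max_nonneg:
  fixes L :: "'a::euclidean_space \<Rightarrow> 'b::euclidean_space"
  assumes "linear L"
  shows "sigma_max L \<ge> 0"
proof -
  obtain b :: 'a where "b \<in> Basis" using nonempty_Basis by blast
  then have "norm (L b) \<le> sigma_max L"
    using norm_le_sigma_max[OF assms, of b] by simp
  then show ?thesis by (metis norm_ge_zero order_trans)
qed

lemma min_gain_pos_imp_image_eq_UNIV:
  fixes L :: "'a::euclidean_space \<Rightarrow> 'b::euclidean_space"
  assumes lin: "linear L" and V: "subspace V" "dim V = DIM('b)" and pos: "min_gain L V > 0"
  shows "L ` V = UNIV"
proof -
  have "inj_on L V"
  proof (rule inj_onI)
    fix v w assume vw: "v \<in> V" "w \<in> V" "L v = L w"
    then have "min_gain L V * norm (v - w) \<le> norm (L (v - w))"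
      using V(1) by (intro min_gain_mult_norm_le[OF lin] subspace_diff)
    also have "L (v - w) = 0" using vw(3) lin by (simp add: linear_diff)
    finally show "v = w" using pos by (simp add: mult_le_0_iff)
  qed
  then have "dim (L ` V) = DIM('b)" using dim_image_eq[OF lin, of V] V span_eq_iff by metis
  then have "span (L ` V) = UNIV" using dim_eq_full by blast
  moreover have "span (L ` V) = L ` V" using span_linear_image[OF lin, of V] V(1) span_eq_iff by metis
  ultimately show ?thesis by simp
qed

lemma less_sigma_minE:
  fixes L :: "'a::euclidean_space \<Rightarrow> 'b::euclidean_space"
  assumes lin: "linear L" and s: "0 \<le> s" "s < sigma_min L"
  obtains V where "subspace V" "dim V = DIM('b)" "s < min_gain L V"
proof -
  have k: "1 \<le> DIM('b)" "DIM('b) \<le> DIM('a)"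
    using s by (auto simp: sigma_min_def sing_val_def split: if_splits)
  have "min_gain L ` {V. subspace V \<and> dim V = DIM('b)} \<noteq> {}"
    using choose_subspace_of_subspace[of "DIM('b)" "UNIV :: 'a set"] k by auto
  then show ?thesis
    using that s less_cSup_iff[OF _ bdd_above_min_gain[OF lin k(1)]]
    unfolding sigma_min_def sing_val_eq_Sup_min_gain[OF k] by auto
qed

text \<open>If \<open>\<parallel>L\<^sup>* y\<parallel> < s \<parallel>y\<parallel>\<close> with \<open>s < \<sigma>\<^sub>m\<close>, write \<open>y = L v\<close> with \<open>v\<close> in a subspace on which \<open>L\<close> expands
  by more than \<open>s\<close>; then \<open>\<parallel>y\<parallel>\<^sup>2 = v \<bullet> L\<^sup>* y\<close> is too small.\<close>
lemma sigma_min_le_norm_adjoint: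
  fixes L :: "'a::euclidean_space \<Rightarrow> 'b::euclidean_space"
  assumes lin: "linear L" and pos: "sigma_min L > 0"
  shows "sigma_min L * norm y \<le> norm (adjoint L y)"
proof (rule ccontr)
  assume "\<not> ?thesis"
  then have y0: "y \<noteq> 0" and s: "norm (adjoint L y) / norm y < sigma_min L"
    by (auto simp: divide_less_eq)
  obtain V where V: "subspace V" "dim V = DIM('b)"
    and gain: "norm (adjoint L y) / norm y < min_gain L V"
    using less_sigma_minE[OF lin _ s] by auto
  define I where "I = min_gain L V"
  have adj_lt: "norm (adjoint L y) < I * norm y"
    using gain y0 by (simp add: I_def divide_less_eq)
  have I0: "I > 0"
    using gain divide_nonneg_nonneg[OF norm_ge_zero norm_ge_zero, of "adjoint L y" y]
    unfolding I_def by linarith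
  obtain v where v: "v \<in> V" "L v = y"
    using min_gain_pos_imp_image_eq_UNIV[OF lin V I0[unfolded I_def]] by (metis UNIV_I imageE)
  have nv: "norm v \<le> norm y / I"
    using min_gain_mult_norm_le[OF lin V(1) v(1)] v(2) I0 by (simp add: I_def le_divide_eq mult.commute)
  have "norm y * norm y = v \<bullet> adjoint L y"
    using adjoint_works[OF lin, of v y] v by (simp add: dot_square_norm power2_eq_square)
  also have "\<dots> \<le> norm v * norm (adjoint L y)" by (rule Cauchy_Schwarz_ineq2[THEN abs_le_D1])
  also have "\<dots> \<le> norm y / I * norm (adjoint L y)"
    using nv by (rule mult_right_mono) simp
  also have "\<dots> < norm y / I * (I * norm y)"
    using adj_lt y0 I0 by (intro mult_strict_left_mono) auto
  also have "\<dots> = norm y * norm y" using I0 by simp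
  finally show False by simp
qed

section \<open>The multiplier and the penalty function\<close>

lemma grad_eq_of_has_derivative:
  fixes F :: "'a::euclidean_space \<Rightarrow> real"
  assumes "(F has_derivative F') (at x)"
  shows "grad F x = (\<Sum>i\<in>Basis. F' i *\<^sub>R i)" and "F' v = v \<bullet> grad F x"
proof -
  define D where "D = (\<Sum>i\<in>Basis. F' i *\<^sub>R i)"
  have lin: "linear F'" using assms has_derivative_linear by blast
  have F'v: "F' v = v \<bullet> D" for v
    using linear_eq_sum_Basis[OF lin, of v] by (simp add: D_def inner_sum_right mult.commute)
  then have "F' = (\<lambda>v. v \<bullet> D)" by blast
  then have GD: "GDERIV F x :> D" using assms by (simp add: gderiv_def)
  have "grad F x = D"
    unfolding grad_def
  proof (rule the_equality[where P="\<lambda>D. GDERIV F x :> D", OF GD])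
    fix D' assume "GDERIV F x :> D'"
    then have "(\<lambda>v. v \<bullet> D') = (\<lambda>v. v \<bullet> D)"
      using has_derivative_unique GD unfolding gderiv_def by blast
    then show "D' = D" by (simp add: fun_eq_iff vector_eq_ldot)
  qed
  then show "grad F x = (\<Sum>i\<in>Basis. F' i *\<^sub>R i)" and "F' v = v \<bullet> grad F x"
    by (simp only: D_def, simp only: F'v)
qed

text \<open>\<open>gram h z = Dh(z) Dh(z)\<^sup>*\<close>, written in coordinates so that its smoothness in \<open>z\<close> is
  evident.\<close>
definition gram :: "('a::euclidean_space \<Rightarrow> 'b::euclidean_space) \<Rightarrow> 'a \<Rightarrow> 'b \<Rightarrow> 'b" where
  "gram h z u = (\<Sum>i\<in>Basis. (u \<bullet> Dif h z i) *\<^sub>R Dif h z i)"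

text \<open>The full-rank set \<open>Dset h\<close>: \<open>Dh Dh\<^sup>*\<close> is injective iff \<open>Dh\<close> has rank \<open>m\<close>.\<close>
definition regular_set :: "('a::euclidean_space \<Rightarrow> 'b::euclidean_space) \<Rightarrow> 'a set" where
  "regular_set h = {z. inj (gram h z)}"

lemma linear_gram: "linear (gram h z)"
  unfolding gram_def
  by (intro linear_compose_sum linear_scaleR_left) (auto intro!: linearI simp: inner_add_left scaleR_add_left)

lemma gram_eq_Dif_adjoint:
  assumes "linear (Dif h z)"
  shows "gram h z = (\<lambda>u. Dif h z (adjoint (Dif h z) u))"
  using assms by (auto simp: adjoint_eq_sum_Basis gram_def linear_sum linear_scale inner_commute)

lemma inner_gram:
  assumes "linear (Dif h z)"
  shows "u \<bullet> gram h z u = (norm (adjoint (Dif h z) u))^2"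
  using adjoint_works[OF assms, of "adjoint (Dif h z) u" u]
  by (simp add: gram_eq_Dif_adjoint[OF assms] power2_norm_eq_inner inner_commute)

locale smooth_constraints =
  fixes f :: "'a::euclidean_space \<Rightarrow> real" and h :: "'a \<Rightarrow> 'b::euclidean_space"
  assumes smooth_f: "smooth f" and smooth_h: "smooth h"
begin

lemma linear_Dif_h: "linear (Dif h z)"
  using smooth_has_derivative[OF smooth_h] has_derivative_linear by blast

lemma Ck_on_gram: "open U \<Longrightarrow> Ck_on k U (\<lambda>z. gram h z b)"
  unfolding gram_def
  by (intro Ck_on_sum Ck_on_scaleR Ck_on_inner Ck_on_const smooth_imp_Ck_on_Dif[OF smooth_h]) auto

lemma open_regular_set: "open (regular_set h)"
  unfolding open_dist
proof
  fix z0 assume z0: "z0 \<in> regular_set h"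
  have "continuous (at z0) (\<lambda>z. gram h z b)" for b
    using Ck_on_imp_continuous_on[OF Ck_on_gram[OF open_UNIV, of 0 b]] continuous_on_eq_continuous_at
    by blast
  then obtain c d where cd: "c > 0" "d > 0" "\<And>z u. dist z z0 < d \<Longrightarrow> c * norm u \<le> norm (gram h z u)"
    using linear_family_bounded_below_near[where A="gram h", OF linear_gram] z0
    unfolding regular_set_def by blast
  have "inj (gram h z)" if "dist z z0 < d" for z
  proof (rule injI)
    fix u w assume "gram h z u = gram h z w"
    then have "c * norm (u - w) \<le> 0"
      using cd(3)[OF that, of "u - w"] by (simp add: linear_diff[OF linear_gram])
    then show "u = w" using cd(1) by (simp add: mult_le_0_iff)
  qed
  then show "\<exists>e>0. \<forall>y. dist y z0 < e \<longrightarrow> y \<in> regular_set h"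
    using cd(2) unfolding regular_set_def by blast
qed

lemma Dif_f_eq_inner_grad: "Dif f z v = v \<bullet> grad f z"
  using grad_eq_of_has_derivative(2)[OF smooth_has_derivative[OF smooth_f]] .

lemma gram_lam:
  assumes "z \<in> regular_set h"
  shows "gram h z (lam f h z) = Dif h z (grad f z)"
proof -
  have inj: "inj (gram h z)" using assms by (simp add: regular_set_def)
  then obtain u where u: "gram h z u = Dif h z (grad f z)"
    using linear_inj_imp_surj[OF linear_gram] by (metis surjD)
  have "lam f h z = u"
    unfolding lam_def using inj u
    by (intro pinv_adjoint_eqI[OF linear_Dif_h]) (simp_all add: gram_eq_Dif_adjoint[OF linear_Dif_h])
  then show ?thesis using u by simp
qed

lemma Ck_on_lam: "Ck_on k (regular_set h) (lam f h)"
proof (rule Ck_on_linear_solution[OF open_regular_set linear_gram])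
  show "Ck_on k (regular_set h) (\<lambda>z. \<Sum>i\<in>Basis. Dif f z i *\<^sub>R Dif h z i)"
    by (intro Ck_on_sum Ck_on_scaleR smooth_imp_Ck_on_Dif smooth_f smooth_h open_regular_set) auto
  show "gram h z (lam f h z) = (\<Sum>i\<in>Basis. Dif f z i *\<^sub>R Dif h z i)" if "z \<in> regular_set h" for z
    using gram_lam[OF that] linear_Dif_h[of z]
    by (simp add: grad_eq_of_has_derivative(1)[OF smooth_has_derivative[OF smooth_f]] linear_sum
        linear_scale)
  show "Ck_on k (regular_set h) (\<lambda>z. gram h z b)" for b
    by (rule Ck_on_gram[OF open_regular_set])
qed (simp add: regular_set_def)

lemma gfun_eq: "gfun f h \<beta> = (\<lambda>z. f z - h z \<bullet> lam f h z + \<beta> * (h z \<bullet> h z))"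
  unfolding gfun_def by (simp add: power2_norm_eq_inner)

lemma Ck_on_gfun: "Ck_on k (regular_set h) (gfun f h \<beta>)"
  unfolding gfun_eq
  by (intro Ck_on_add Ck_on_diff Ck_on_mult Ck_on_inner Ck_on_const smooth_imp_Ck_on smooth_f smooth_h
      Ck_on_lam open_regular_set)

lemma has_derivative_gfun:
  assumes "z \<in> regular_set h"
  shows "(gfun f h \<beta> has_derivative (\<lambda>v. v \<bullet> grad (gfun f h \<beta>) z)) (at z)"
proof -
  have d: "(gfun f h \<beta> has_derivative Dif (gfun f h \<beta>) z) (at z)"
    using Ck_on_has_derivative[OF Ck_on_gfun[of "Suc 0"] assms] .
  moreover have "Dif (gfun f h \<beta>) z = (\<lambda>v. v \<bullet> grad (gfun f h \<beta>) z)"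
    using grad_eq_of_has_derivative(2)[OF d] by blast
  ultimately show ?thesis by simp
qed

lemma Ck_on_grad_gfun: "Ck_on k (regular_set h) (grad (gfun f h \<beta>))"
proof (rule Ck_on_cong[OF open_regular_set])
  show "Ck_on k (regular_set h) (\<lambda>z. \<Sum>i\<in>Basis. Dif (gfun f h \<beta>) z i *\<^sub>R i)"
    using Ck_on_gfun[of "Suc k"] by (intro Ck_on_sum Ck_on_scaleR Ck_on_const open_regular_set) auto
  show "(\<Sum>i\<in>Basis. Dif (gfun f h \<beta>) z i *\<^sub>R i) = grad (gfun f h \<beta>) z"
    if "z \<in> regular_set h" for z
    using grad_eq_of_has_derivative(1)[OF Ck_on_has_derivative[OF Ck_on_gfun[of "Suc 0"] that]]
    by simp
qed

lemma grad_gfun: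
  assumes z: "z \<in> regular_set h"
  shows "grad (gfun f h \<beta>) z = grad f z - adjoint (Dif h z) (lam f h z)
    - adjoint (Dif (lam f h) z) (h z) + (2 * \<beta>) *\<^sub>R adjoint (Dif h z) (h z)"
proof -
  have dlam: "(lam f h has_derivative Dif (lam f h) z) (at z)"
    using Ck_on_has_derivative[OF Ck_on_lam[of "Suc 0"] z] .
  have "(gfun f h \<beta> has_derivative (\<lambda>v. Dif f z v - (h z \<bullet> Dif (lam f h) z v + Dif h z v \<bullet> lam f h z)
      + \<beta> * (h z \<bullet> Dif h z v + Dif h z v \<bullet> h z))) (at z)"
    unfolding gfun_eq
    by (intro has_derivative_add has_derivative_diff has_derivative_inner has_derivative_mult_right
        smooth_has_derivative[OF smooth_f] smooth_has_derivative[OF smooth_h] dlam)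
  from has_derivative_unique[OF has_derivative_gfun[OF z] this]
  have "v \<bullet> grad (gfun f h \<beta>) z = v \<bullet> (grad f z - adjoint (Dif h z) (lam f h z)
      - adjoint (Dif (lam f h) z) (h z) + (2 * \<beta>) *\<^sub>R adjoint (Dif h z) (h z))" for v
    using adjoint_works[OF linear_Dif_h] adjoint_works[OF has_derivative_linear[OF dlam]]
    by (simp add: fun_eq_iff Dif_f_eq_inner_grad inner_diff_right inner_add_right inner_commute
        algebra_simps)
  then show ?thesis using vector_eq_ldot by blast
qed

lemma Dif_h_grad_gfun:
  assumes z: "z \<in> regular_set h"
  shows "Dif h z (grad (gfun f h \<beta>) z)
    = (2 * \<beta>) *\<^sub>R gram h z (h z) - Dif h z (adjoint (Dif (lam f h) z) (h z))"
  using gram_lam[OF z] linear_Dif_h[of z]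
  by (simp add: grad_gfun[OF z] gram_eq_Dif_adjoint[OF linear_Dif_h] linear_add linear_diff linear_scale)

end

section \<open>Estimates for one gradient step\<close>

text \<open>Linearising \<open>H\<close> at \<open>x\<close>, the step \<open>-t G\<close> splits into the contraction
  \<open>(I - 2 \<beta> t L L\<^sup>*) (H x)\<close>, the perturbation \<open>t L p\<close> and the Taylor remainder.\<close>
lemma norm_after_gradient_step_le:
  fixes L :: "'a::euclidean_space \<Rightarrow> 'b::euclidean_space"
  assumes lin: "linear L" and sig: "sigma_min L > 0"
    and taylor: "\<And>v. norm (H (x + v) - H x - L v) \<le> Ch * (norm v)^2"
    and LG: "L G = (2 * \<beta>) *\<^sub>R L (adjoint L (H x)) - L p"
    and p: "norm p \<le> Cl * norm (H x)"
    and t: "t \<ge> 0" and \<beta>: "\<beta> \<ge> 0" and step: "2 * \<beta> * t * (onorm L)^2 \<le> 1"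
  shows "norm (H (x - t *\<^sub>R G))
    \<le> (1 - t * (2 * \<beta> * (sigma_min L)^2 - sigma_max L * Cl)) * norm (H x) + Ch * t^2 * (norm G)^2"
proof -
  define c where "c = 2 * \<beta> * t"
  define E where "E = H (x + - (t *\<^sub>R G)) - H x - L (- (t *\<^sub>R G))"
  have "L (- (t *\<^sub>R G)) = t *\<^sub>R L p - c *\<^sub>R L (adjoint L (H x))"
    unfolding linear_neg[OF lin] linear_scale[OF lin] LG by (simp add: c_def algebra_simps)
  then have split: "H (x - t *\<^sub>R G) = (H x - c *\<^sub>R L (adjoint L (H x))) + t *\<^sub>R L p + E"
    unfolding E_def by simp
  have "norm (H x - c *\<^sub>R L (adjoint L (H x))) \<le> (1 - c * (sigma_min L)^2) * norm (H x)"
    using sig \<beta> t step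
    by (intro norm_diff_scaleR_adjoint_le[OF lin sigma_min_le_norm_adjoint[OF lin sig]])
      (auto simp: c_def)
  moreover have "norm (t *\<^sub>R L p) \<le> t * (sigma_max L * Cl) * norm (H x)"
  proof -
    have "norm (L p) \<le> sigma_max L * norm p" by (rule norm_le_sigma_max[OF lin])
    also have "\<dots> \<le> sigma_max L * (Cl * norm (H x))"
      using p sigma_max_nonneg[OF lin] by (rule mult_left_mono)
    finally show ?thesis using t by (simp add: mult_left_mono mult.assoc)
  qed
  moreover have "norm E \<le> Ch * t^2 * (norm G)^2"
    using taylor[of "- (t *\<^sub>R G)"] t unfolding E_def by (simp add: power_mult_distrib)
  ultimately have "norm (H (x - t *\<^sub>R G))
      \<le> (1 - c * (sigma_min L)^2) * norm (H x) + t * (sigma_max L * Cl) * norm (H x)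
        + Ch * t^2 * (norm G)^2"
    unfolding split
    using norm_triangle_ineq[of "H x - c *\<^sub>R L (adjoint L (H x)) + t *\<^sub>R L p" E]
      norm_triangle_ineq[of "H x - c *\<^sub>R L (adjoint L (H x))" "t *\<^sub>R L p"] by linarith
  then show ?thesis by (simp add: c_def algebra_simps)
qed

text \<open>The two \<open>\<nabla>g\<close>-dependent terms in the definition of \<open>t\<^sub>1\<close> are exactly what makes the
  right-hand side of the previous estimate stay below \<open>R\<close>: the first keeps the
  quadratic term below \<open>R/2\<close>, the second lets the contraction absorb it when
  \<open>\<parallel>h\<parallel> > R/2\<close>.\<close>
lemma contraction_plus_quadratic_le:
  fixes a R Ch \<delta> t n :: real
  assumes a: "0 \<le> a" "a \<le> R" and R: "R > 0" and Ch: "Ch > 0" and \<delta>: "\<delta> > 0" and t: "t \<ge> 0"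
    and n: "n > 0"
    and t_sqrt: "t \<le> sqrt (R / (2 * Ch)) / n" and t_lin: "t \<le> \<delta> * R / (2 * Ch * n^2)"
  shows "(1 - t * \<delta>) * a + Ch * t^2 * n^2 \<le> R"
proof -
  have "t * n \<le> sqrt (R / (2 * Ch))" using t_sqrt n by (simp add: le_divide_eq)
  then have "(t * n)^2 \<le> (sqrt (R / (2 * Ch)))^2"
    using t n by (intro power_mono) auto
  then have "(t * n)^2 \<le> R / (2 * Ch)" using R Ch by simp
  then have quad: "Ch * t^2 * n^2 \<le> R / 2" using Ch by (simp add: field_simps power_mult_distrib)
  have "t * (2 * Ch * n^2) \<le> \<delta> * R" using t_lin Ch n by (simp add: le_divide_eq)
  then have "t / 2 * (t * (2 * Ch * n^2)) \<le> t / 2 * (\<delta> * R)" using t by (intro mult_left_mono) auto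
  then have quad': "Ch * t^2 * n^2 \<le> t * \<delta> * R / 2" by (simp add: power2_eq_square algebra_simps)
  show ?thesis
  proof (cases "a \<le> R / 2")
    case True
    have "0 \<le> t * \<delta> * a" using t \<delta> a by simp
    then have "(1 - t * \<delta>) * a \<le> a" by (simp add: algebra_simps)
    then show ?thesis using quad True by linarith
  next
    case False
    then have "t * \<delta> * (R / 2) \<le> t * \<delta> * a" using t \<delta> by (intro mult_left_mono) auto
    then show ?thesis using quad' a by (simp add: algebra_simps)
  qed
qed

lemma closed_segment_minus_scaleR:
  fixes x G :: "'a::real_vector"
  assumes "\<alpha> \<ge> 0"
  shows "closed_segment x (x - \<alpha> *\<^sub>R G) = (\<lambda>s. x - s *\<^sub>R G) ` {0..\<alpha>}"
proof -
  have "(\<lambda>u. \<alpha> * u) ` {0..1} = {0..\<alpha>}"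
  proof (cases "\<alpha> = 0")
    case True then show ?thesis by force
  next
    case False then show ?thesis using assms by (simp add: image_mult_atLeastAtMost)
  qed
  then have "(\<lambda>s. x - s *\<^sub>R G) ` {0..\<alpha>} = (\<lambda>s. x - s *\<^sub>R G) ` (\<lambda>u. \<alpha> * u) ` {0..1}"
    by simp
  also have "\<dots> = (\<lambda>u. x - (\<alpha> * u) *\<^sub>R G) ` {0..1}"
    by (simp only: image_image)
  also have "\<dots> = (\<lambda>u. (1 - u) *\<^sub>R x + u *\<^sub>R (x - \<alpha> *\<^sub>R G)) ` {0..1}"
    by (rule image_cong) (auto simp: algebra_simps)
  finally show ?thesis by (simp add: closed_segment_image_interval)
qed

lemma has_real_derivative_along_ray:
  fixes g :: "'a::real_inner \<Rightarrow> real"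
  assumes "(g has_derivative (\<lambda>v. v \<bullet> D)) (at (x - s *\<^sub>R G))"
  shows "((\<lambda>s. g (x - s *\<^sub>R G)) has_real_derivative - (G \<bullet> D)) (at s)"
proof -
  have "((\<lambda>s. x - s *\<^sub>R G) has_derivative (\<lambda>r. - (r *\<^sub>R G))) (at s)"
    by (auto intro!: derivative_eq_intros)
  from has_derivative_compose[OF this assms] show ?thesis
    unfolding has_field_derivative_def
    by (rule has_derivative_eq_rhs) (simp add: fun_eq_iff mult.commute)
qed

text \<open>Since \<open>\<nabla>g\<close> is \<open>L\<close>-Lipschitz on the segment,
  \<open>s \<mapsto> g (x - s \<nabla>g x) + s \<parallel>\<nabla>g x\<parallel>\<^sup>2 - L s\<^sup>2 \<parallel>\<nabla>g x\<parallel>\<^sup>2 / 2\<close> is nonincreasing.\<close>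
lemma descent_lemma:
  fixes g :: "'a::euclidean_space \<Rightarrow> real"
  assumes seg: "closed_segment x (x - \<alpha> *\<^sub>R Gr x) \<subseteq> S" and \<alpha>: "\<alpha> \<ge> 0"
    and dg: "\<And>y. y \<in> S \<Longrightarrow> (g has_derivative (\<lambda>v. v \<bullet> Gr y)) (at y)"
    and dGr: "\<And>y. y \<in> S \<Longrightarrow> (Gr has_derivative DGr y) (at y)"
    and bnd: "\<And>y. y \<in> S \<Longrightarrow> onorm (DGr y) \<le> Lb"
  shows "g x - g (x - \<alpha> *\<^sub>R Gr x) \<ge> \<alpha> * (norm (Gr x))^2 - Lb * \<alpha>^2 * (norm (Gr x))^2 / 2"
proof -
  define G where "G = Gr x"
  define \<phi> where "\<phi> s = g (x - s *\<^sub>R G) + s * (norm G)^2 - Lb * s^2 * (norm G)^2 / 2" for s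
  have on_seg: "x - s *\<^sub>R G \<in> closed_segment x (x - \<alpha> *\<^sub>R G)" if "s \<in> {0..\<alpha>}" for s
    using that closed_segment_minus_scaleR[OF \<alpha>] by blast
  have "\<phi> \<alpha> \<le> \<phi> 0"
  proof (rule DERIV_nonpos_imp_nonincreasing[OF \<alpha>])
    fix s assume s: "0 \<le> s" "s \<le> \<alpha>"
    define y where "y = x - s *\<^sub>R G"
    have yS: "y \<in> S" using on_seg s seg by (auto simp: y_def G_def)
    have "norm (Gr x - Gr y) \<le> Lb * norm (x - y)"
    proof (rule differentiable_bound[where f=Gr and f'=DGr and B=Lb, OF convex_closed_segment])
      show "(Gr has_derivative DGr z) (at z within closed_segment x (x - \<alpha> *\<^sub>R G))"
        if "z \<in> closed_segment x (x - \<alpha> *\<^sub>R G)" for z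
        using that seg dGr by (auto simp: G_def intro: has_derivative_at_withinI)
      show "onorm (DGr z) \<le> Lb" if "z \<in> closed_segment x (x - \<alpha> *\<^sub>R G)" for z
        using that seg bnd by (auto simp: G_def)
    qed (use on_seg s in \<open>auto simp: y_def\<close>)
    then have lip: "norm (Gr x - Gr y) \<le> Lb * (s * norm G)" using s by (simp add: y_def)
    have "((\<lambda>s. g (x - s *\<^sub>R G)) has_real_derivative - (G \<bullet> Gr y)) (at s)"
      using dg[OF yS] unfolding y_def by (rule has_real_derivative_along_ray)
    then have "DERIV \<phi> s :> - (G \<bullet> Gr y) + (norm G)^2 - Lb * s * (norm G)^2"
      unfolding \<phi>_def by (auto intro!: derivative_eq_intros)
    moreover have "(norm G)^2 - G \<bullet> Gr y \<le> Lb * s * (norm G)^2"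
    proof -
      have "(norm G)^2 - G \<bullet> Gr y = G \<bullet> (Gr x - Gr y)"
        by (simp add: G_def inner_diff_right power2_norm_eq_inner)
      also have "\<dots> \<le> norm G * norm (Gr x - Gr y)" by (rule Cauchy_Schwarz_ineq2[THEN abs_le_D1])
      also have "\<dots> \<le> norm G * (Lb * (s * norm G))" using lip by (rule mult_left_mono) simp
      finally show ?thesis by (simp add: power2_eq_square algebra_simps)
    qed
    ultimately show "\<exists>y. DERIV \<phi> s :> y \<and> y \<le> 0" by force
  qed
  then show ?thesis by (simp add: \<phi>_def G_def)
qed

lemma backtracking_accepts:
  fixes P :: "real \<Rightarrow> bool"
  assumes acc: "\<And>\<alpha>. 0 < \<alpha> \<Longrightarrow> \<alpha> \<le> m \<Longrightarrow> P \<alpha>"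
    and m: "0 < m" "m \<le> a0" and \<tau>: "0 < \<tau>" "\<tau> < 1"
  shows "\<exists>k. P (a0 * \<tau> ^ k)" and "P (a0 * \<tau> ^ (LEAST k. P (a0 * \<tau> ^ k)))"
    and "\<tau> * m \<le> a0 * \<tau> ^ (LEAST k. P (a0 * \<tau> ^ k))"
proof -
  obtain n where "\<tau> ^ n < m / a0" using real_arch_pow_inv[of "m / a0" \<tau>] m \<tau> by auto
  then have "a0 * \<tau> ^ n < m" using m by (simp add: less_divide_eq mult.commute)
  moreover have "0 < a0 * \<tau> ^ n" using m \<tau> by simp
  ultimately show ex: "\<exists>k. P (a0 * \<tau> ^ k)" using acc by force
  then show "P (a0 * \<tau> ^ (LEAST k. P (a0 * \<tau> ^ k)))" by (rule LeastI_ex)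
  show "\<tau> * m \<le> a0 * \<tau> ^ (LEAST k. P (a0 * \<tau> ^ k))"
  proof (cases "LEAST k. P (a0 * \<tau> ^ k)")
    case 0
    have "\<tau> * m \<le> m" using m \<tau> by (simp add: mult_left_le_one_le)
    then have "\<tau> * m \<le> a0" using m by linarith
    with 0 show ?thesis by simp
  next
    case (Suc j)
    then have "\<not> P (a0 * \<tau> ^ j)" using not_less_Least[of j] by force
    moreover have "0 < a0 * \<tau> ^ j" using m \<tau> by simp
    ultimately have "m < a0 * \<tau> ^ j" using acc by force
    then show ?thesis using Suc \<tau> by (simp add: algebra_simps)
  qed
qed

section \<open>Backtracking on the region \<open>C\<close>\<close>

lemma alpha1_pos:
  "0 < a01 \<Longrightarrow> c1 < 1 \<Longrightarrow> 0 \<le> Lg f h \<beta> R \<Longrightarrow> 0 < alpha1 f h \<beta> R a01 c1"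
  by (auto simp: alpha1_def)

lemma alpha1_le: "alpha1 f h \<beta> R a01 c1 \<le> a01"
  by (simp add: alpha1_def)

lemma Lg_mult_le_of_le_alpha1:
  assumes "0 \<le> \<alpha>" "\<alpha> \<le> alpha1 f h \<beta> R a01 c1" "c1 < 1" "0 \<le> Lg f h \<beta> R"
  shows "Lg f h \<beta> R * \<alpha> \<le> 2 * (1 - c1)"
proof (cases "Lg f h \<beta> R = 0")
  case False
  then have "\<alpha> \<le> 2 * (1 - c1) / Lg f h \<beta> R" using assms(2) by (simp add: alpha1_def)
  then show ?thesis using False assms(4) by (simp add: le_divide_eq mult.commute)
qed (use assms in simp)

locale penalty_region = smooth_constraints f h
  for f :: "'a::euclidean_space \<Rightarrow> real" and h :: "'a \<Rightarrow> 'b::euclidean_space" +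
  fixes \<beta> R sig Ch :: real
  assumes R_pos: "R > 0" and sig_pos: "sig > 0"
    and sigma_min_ge: "\<And>y. y \<in> Cset h R \<Longrightarrow> sigma_min (Dif h y) \<ge> sig"
    and compact_Cset: "compact (Cset h R)"
    and Ch_pos: "Ch > 0"
    and taylor_h: "\<And>y v. y \<in> Cset h R \<Longrightarrow> norm (h (y + v) - h y - Dif h y v) \<le> Ch * (norm v)^2"
    and beta_nonneg: "\<beta> \<ge> 0"
begin

abbreviation "g \<equiv> gfun f h \<beta>"

lemma sigma_min_pos: "y \<in> Cset h R \<Longrightarrow> sigma_min (Dif h y) > 0"
  using sigma_min_ge sig_pos by force

lemma Cset_subset_regular_set: "Cset h R \<subseteq> regular_set h"
proof
  fix y assume y: "y \<in> Cset h R"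
  have "inj (gram h y)"
  proof (rule injI)
    fix u w assume "gram h y u = gram h y w"
    then have "(u - w) \<bullet> gram h y (u - w) = 0" by (simp add: linear_diff[OF linear_gram])
    then have "norm (adjoint (Dif h y) (u - w)) = 0" by (simp add: inner_gram[OF linear_Dif_h])
    then have "sigma_min (Dif h y) * norm (u - w) \<le> 0"
      using sigma_min_le_norm_adjoint[OF linear_Dif_h sigma_min_pos[OF y]] by metis
    then show "u = w" using sigma_min_pos[OF y] by (simp add: mult_le_0_iff)
  qed
  then show "y \<in> regular_set h" by (simp add: regular_set_def)
qed

lemma has_derivative_grad_gfun:
  "y \<in> Cset h R \<Longrightarrow> (grad g has_derivative Dif (grad g) y) (at y)"
  using Ck_on_has_derivative[OF Ck_on_grad_gfun[of "Suc 0"]] Cset_subset_regular_set by blast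

text \<open>The supremum \<open>L\<^sub>g\<close> is finite because the Hessian is continuous on the compact set \<open>C\<close>.\<close>
lemma onorm_hessian_le_Lg:
  assumes "y \<in> Cset h R"
  shows "onorm (Dif (grad g) y) \<le> Lg f h \<beta> R"
proof -
  define F where "F z = (\<Sum>i\<in>Basis. norm (Dif (grad g) z i))" for z
  have "continuous_on (regular_set h) (\<lambda>z. Dif (grad g) z i)" for i
    using Ck_on_grad_gfun[of "Suc 0"] by simp
  then have "continuous_on (Cset h R) F"
    unfolding F_def by (intro continuous_intros continuous_on_subset[OF _ Cset_subset_regular_set])
  then obtain B where B: "\<And>z. z \<in> Cset h R \<Longrightarrow> F z \<le> B"
    using compact_continuous_image[OF _ compact_Cset] compact_imp_bounded bounded_real
    by (metis abs_le_D1 image_eqI)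
  have "onorm (Dif (grad g) z) \<le> F z" if "z \<in> Cset h R" for z
  proof (rule onorm_le)
    fix v
    have "linear (Dif (grad g) z)"
      using has_derivative_grad_gfun[OF that] has_derivative_linear by blast
    from norm_linear_diff_le[OF this linear_zero]
    show "norm (Dif (grad g) z v) \<le> F z * norm v" by (simp add: F_def mult.commute)
  qed
  then have "bdd_above ((\<lambda>z. onorm (Dif (grad g) z)) ` Cset h R)"
    using B by (intro bdd_aboveI2[where M=B]) force
  then show ?thesis
    unfolding Lg_def by (rule cSup_upper[OF imageI[OF assms]])
qed

lemma Lg_nonneg: "y \<in> Cset h R \<Longrightarrow> 0 \<le> Lg f h \<beta> R"
  using onorm_hessian_le_Lg onorm_pos_le has_derivative_bounded_linear[OF has_derivative_grad_gfun]
  by (meson order_trans)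

context
  fixes x assumes x: "x \<in> Cset h R" and beta_gt: "\<beta> > beta1 f h x"
begin

lemma contraction_gap_pos: "2 * \<beta> * (sigma_min (Dif h x))^2 - sigma_max (Dif h x) * C_lam f h x > 0"
proof -
  have "beta1 f h x * (2 * (sigma_min (Dif h x))^2) = sigma_max (Dif h x) * C_lam f h x"
    using sigma_min_pos[OF x] by (simp add: beta1_def)
  moreover have "beta1 f h x * (2 * (sigma_min (Dif h x))^2) < \<beta> * (2 * (sigma_min (Dif h x))^2)"
    using beta_gt sigma_min_pos[OF x] by simp
  ultimately show ?thesis by (simp add: algebra_simps)
qed

lemma beta_pos: "\<beta> > 0"
proof -
  have "0 \<le> sigma_max (Dif h x)" "0 \<le> C_lam f h x"
    using sigma_max_nonneg[OF linear_Dif_h] Ck_on_has_derivative[OF Ck_on_lam[of "Suc 0"]]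
      Cset_subset_regular_set x
    by (auto simp: C_lam_def intro!: onorm_pos_le has_derivative_bounded_linear)
  then have "0 \<le> beta1 f h x" by (simp add: beta1_def)
  then show ?thesis using beta_gt by linarith
qed

lemma onorm_Dif_h_pos: "onorm (Dif h x) > 0"
proof -
  obtain b :: 'b where "b \<in> Basis" using nonempty_Basis by blast
  then have "sigma_min (Dif h x) \<le> norm (adjoint (Dif h x) b)"
    using sigma_min_le_norm_adjoint[OF linear_Dif_h sigma_min_pos[OF x], of b] by simp
  also have "\<dots> \<le> onorm (Dif h x)"
    using norm_adjoint_le_onorm[OF linear_Dif_h, of x b] \<open>b \<in> Basis\<close> by simp
  finally show ?thesis using sigma_min_pos[OF x] by simp
qed

lemma t1_pos: "t1 f h \<beta> R Ch x > 0"
  using contraction_gap_pos beta_pos onorm_Dif_h_pos R_pos Ch_pos by (simp add: t1_def Let_def)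

lemma gradient_step_in_Cset:
  assumes t: "0 \<le> t" "t \<le> t1 f h \<beta> R Ch x"
  shows "x - t *\<^sub>R grad g x \<in> Cset h R"
proof (cases "grad g x = 0")
  case True then show ?thesis using x by simp
next
  case False
  define \<delta> where "\<delta> = 2 * \<beta> * (sigma_min (Dif h x))^2 - sigma_max (Dif h x) * C_lam f h x"
  have t_third: "2 * \<beta> * t * (onorm (Dif h x))^2 \<le> 1"
    and t_sqrt: "t \<le> sqrt (R / (2 * Ch)) / norm (grad g x)"
    and t_lin: "t \<le> \<delta> * R / (2 * Ch * (norm (grad g x))^2)"
    using t False beta_pos onorm_Dif_h_pos by (auto simp: t1_def Let_def \<delta>_def field_simps)
  have xU: "x \<in> regular_set h" using x Cset_subset_regular_set by blast
  have "linear (Dif (lam f h) x)"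
    using Ck_on_has_derivative[OF Ck_on_lam[of "Suc 0"] xU] has_derivative_linear by blast
  then have p: "norm (adjoint (Dif (lam f h) x) (h x)) \<le> C_lam f h x * norm (h x)"
    unfolding C_lam_def by (rule norm_adjoint_le_onorm)
  have "norm (h (x - t *\<^sub>R grad g x)) \<le> (1 - t * \<delta>) * norm (h x) + Ch * t^2 * (norm (grad g x))^2"
    unfolding \<delta>_def
    by (rule norm_after_gradient_step_le[OF linear_Dif_h sigma_min_pos[OF x] taylor_h[OF x] _ p
          t(1) beta_nonneg t_third])
      (simp add: Dif_h_grad_gfun[OF xU] gram_eq_Dif_adjoint[OF linear_Dif_h])
  also have "\<dots> \<le> R"
    using x R_pos Ch_pos contraction_gap_pos t(1) False t_sqrt t_lin
    by (intro contraction_plus_quadratic_le) (auto simp: Cset_def \<delta>_def)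
  finally show ?thesis by (simp add: Cset_def)
qed

lemma armijo_condition:
  assumes \<alpha>: "0 < \<alpha>" "\<alpha> \<le> alpha1 f h \<beta> R a01 c1" "\<alpha> \<le> t1 f h \<beta> R Ch x" and c1: "0 < c1" "c1 < 1"
  shows "bt_accept f h \<beta> R c1 x \<alpha>"
proof -
  define G where "G = grad g x"
  have seg: "closed_segment x (x - \<alpha> *\<^sub>R G) \<subseteq> Cset h R"
    using gradient_step_in_Cset \<alpha> by (auto simp: closed_segment_minus_scaleR G_def)
  have "\<alpha> * (norm G)^2 - Lg f h \<beta> R * \<alpha>^2 * (norm G)^2 / 2 \<le> g x - g (x - \<alpha> *\<^sub>R G)"
    unfolding G_def
    by (rule descent_lemma[OF seg[unfolded G_def] _ has_derivative_gfun has_derivative_grad_gfun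
          onorm_hessian_le_Lg]) (use \<alpha> Cset_subset_regular_set in auto)
  moreover have "Lg f h \<beta> R * \<alpha> \<le> 2 * (1 - c1)"
    by (rule Lg_mult_le_of_le_alpha1) (use \<alpha> c1 Lg_nonneg[OF x] in auto)
  then have "c1 * \<alpha> * (norm G)^2 \<le> \<alpha> * (norm G)^2 - Lg f h \<beta> R * \<alpha>^2 * (norm G)^2 / 2"
    using mult_left_mono[of "Lg f h \<beta> R * \<alpha>" "2 * (1 - c1)" "\<alpha> * (norm G)^2 / 2"] \<alpha>
    by (simp add: power2_eq_square algebra_simps)
  moreover have "x - \<alpha> *\<^sub>R G \<in> Cset h R" using seg by auto
  ultimately show ?thesis by (simp add: bt_accept_def Let_def G_def)
qed

end

end

theorem mainTheorem8:
  fixes f :: "'a::euclidean_space \<Rightarrow> real" and h :: "'a \<Rightarrow> 'b::euclidean_space"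
    and \<beta> R sig Ch a01 c1 \<tau>1 :: real and x :: 'a
  assumes f_smooth: "smooth f" and h_smooth: "smooth h"
    and A1: "R > 0" "sig > 0" "\<forall>y\<in>Cset h R. sigma_min (Dif h y) \<ge> sig"
    and A2: "compact {y. h y = 0}" "compact (Cset h R)"
    and A3: "Ch > 0"
      "\<forall>y\<in>Cset h R. \<forall>v. norm (h (y + v) - h y - Dif h y v) \<le> Ch * (norm v)\<^sup>2"
    and params: "a01 > 0" "0 < c1" "c1 < 1" "0 < \<tau>1" "\<tau>1 < 1"
    and hx: "x \<in> Cset h R"
    and hbeta: "\<beta> \<ge> 0" "\<beta> > beta1 f h x"
  shows "bt_terminates f h \<beta> R a01 c1 \<tau>1 x
    \<and> \<tau>1 * min (alpha1 f h \<beta> R a01 c1) (t1 f h \<beta> R Ch x) > 0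
    \<and> bt_step f h \<beta> R a01 c1 \<tau>1 x \<ge> \<tau>1 * min (alpha1 f h \<beta> R a01 c1) (t1 f h \<beta> R Ch x)
    \<and> gfun f h \<beta> x - gfun f h \<beta> (x - bt_step f h \<beta> R a01 c1 \<tau>1 x *\<^sub>R grad (gfun f h \<beta>) x)
        \<ge> c1 * \<tau>1 * min (alpha1 f h \<beta> R a01 c1) (t1 f h \<beta> R Ch x) * (norm (grad (gfun f h \<beta>) x))\<^sup>2"
proof -
  interpret penalty_region f h \<beta> R sig Ch
    using f_smooth h_smooth A1 A2(2) A3 hbeta(1) by unfold_locales auto
  define m where "m = min (alpha1 f h \<beta> R a01 c1) (t1 f h \<beta> R Ch x)"
  define t where "t = bt_step f h \<beta> R a01 c1 \<tau>1 x"
  have m_pos: "0 < m"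
    using alpha1_pos[OF params(1,3) Lg_nonneg[OF hx]] t1_pos[OF hx hbeta(2)] by (simp add: m_def)
  have m_le: "m \<le> a01" by (simp add: m_def alpha1_le min.coboundedI1)
  have accept: "bt_accept f h \<beta> R c1 x \<alpha>" if "0 < \<alpha>" "\<alpha> \<le> m" for \<alpha>
    using that params(2,3) by (intro armijo_condition[OF hx hbeta(2)]) (auto simp: m_def)
  note backtracking = backtracking_accepts[where P="bt_accept f h \<beta> R c1 x",
      OF accept m_pos m_le params(4,5),
      folded bt_terminates_def bt_step_def t_def]
  then have "c1 * (\<tau>1 * m) * (norm (grad g x))^2 \<le> c1 * t * (norm (grad g x))^2"
    using params(2) by (intro mult_right_mono mult_left_mono) auto
  also have "\<dots> \<le> g x - g (x - t *\<^sub>R grad g x)"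
    using backtracking(2) by (simp add: bt_accept_def Let_def)
  finally show ?thesis
    using backtracking m_pos params(4) by (simp add: m_def t_def mult.assoc)
qed

end
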